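(* Assume Assumptions 2. For every $s\in(0,1)$ there exists $\kappa_0<\infty$, depending only on $\|\nu\|_\infty$, $\|\sigma_0\|_\infty$, $\|\sigma_1\|_\infty$, $K$ and $s$, such that for all $\kappa\ge\kappa_0$, $$\sup_{E\in\mathbb R}\|T_{\kappa,E,s}\|<1,$$ where $\|T_{\kappa,E,s}\|$ is the operator norm on $C(\overline{\mathbb C^+})$ with the sup-norm.
   Context: Assumptions 2: $\nu$ has bounded density (also $\nu$) supported in $[-K,K]$, $K<\infty$; $\sigma$ is a probability measure on $\mathbb R^2$ supported in $[-1,1]^2$ whose marginals $\sigma_0,\sigma_1$ have bounded densities (also denoted $\sigma_0,\sigma_1$). Let $\overline{\mathbb C^+}=\mathbb C^+\cup\mathbb R\cup\{i\infty\}$, $C(\overline{\mathbb C^+})$ the continuous complex functions on $\mathbb C^+\cup\mathbb R$ with a finite limit at infinity. For $\kappa\ge0$, $\mu$ is the law of $q=(r+\kappa p_0,r+\kappa p_1)$ with $r\sim\nu$, $(p_0,p_1)\sim\sigma$ independent. For $z\in\mathbb C^+\cup\mathbb R$, $\phi^\pm_{z,q}(w)=\tfrac12\big(\frac{-1}{w+(z-q_0)/\sqrt2}\pm\frac{-1}{w+(z-q_1)/\sqrt2}\big)$, $\phi^\pm_{z,q}(i\infty)=0$, and $(T_{\kappa,z,s}f)(w)=\int f(\phi^+_{z,q}(w))\big(|\phi^+_{z,q}(w)|^s+|\phi^-_{z,q}(w)|^s\big)d\mu(q)$, $(T_{\kappa,z,s}f)(i\infty)=0$. *)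

theory Defs
  imports "HOL-Probability.Probability"
begin

definition Hc :: "complex set" where
  "Hc = {z. Im z \<ge> 0}"

text \<open>The space C of the closed upper half plane compactified by i-infinity:
  continuous functions on the closed half plane with a finite limit at infinity.\<close>
definition Cspace :: "(complex \<Rightarrow> complex) set" where
  "Cspace = {f. continuous_on Hc f \<and> (\<exists>L. (f \<longlongrightarrow> L) (inf at_infinity (principal Hc)))}"

text \<open>Sup norm on C (the value at i-infinity is a limit of values on Hc).\<close>
definition supnorm :: "(complex \<Rightarrow> complex) \<Rightarrow> real" where
  "supnorm f = (SUP w\<in>Hc. cmod (f w))"

text \<open>Assumptions 2, with explicit bounds Bnu, B0, B1 for the sup norms of the densities.\<close>
definition Assumptions2 ::
  "(real \<Rightarrow> real) \<Rightarrow> (real \<times> real) measure \<Rightarrow> (real \<Rightarrow> real) \<Rightarrow> (real \<Rightarrow> real)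
   \<Rightarrow> real \<Rightarrow> real \<Rightarrow> real \<Rightarrow> real \<Rightarrow> bool" where
  "Assumptions2 nu sg s0 s1 K Bnu B0 B1 \<longleftrightarrow>
     nu \<in> borel_measurable borel \<and> (\<forall>x. 0 \<le> nu x \<and> nu x \<le> Bnu) \<and>
     (\<forall>x. x \<notin> {-K..K} \<longrightarrow> nu x = 0) \<and> prob_space (density lborel nu) \<and>
     prob_space sg \<and> sets sg = sets borel \<and>
     emeasure sg (UNIV - {-1..1} \<times> {-1..1}) = 0 \<and>
     s0 \<in> borel_measurable borel \<and> (\<forall>x. 0 \<le> s0 x \<and> s0 x \<le> B0) \<and>
     s1 \<in> borel_measurable borel \<and> (\<forall>x. 0 \<le> s1 x \<and> s1 x \<le> B1) \<and>
     distr sg lborel fst = density lborel s0 \<and>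
     distr sg lborel snd = density lborel s1"

definition mu_law :: "(real \<Rightarrow> real) \<Rightarrow> (real \<times> real) measure \<Rightarrow> real \<Rightarrow> (real \<times> real) measure" where
  "mu_law nu sg \<kappa> =
     distr (density lborel nu \<Otimes>\<^sub>M sg) borel
       (\<lambda>(r, p). (r + \<kappa> * fst p, r + \<kappa> * snd p))"

definition phi_plus :: "complex \<Rightarrow> real \<times> real \<Rightarrow> complex \<Rightarrow> complex" where
  "phi_plus z q w = (1/2) * ((-1) / (w + (z - complex_of_real (fst q)) / sqrt 2)
                          + (-1) / (w + (z - complex_of_real (snd q)) / sqrt 2))"

definition phi_minus :: "complex \<Rightarrow> real \<times> real \<Rightarrow> complex \<Rightarrow> complex" where
  "phi_minus z q w = (1/2) * ((-1) / (w + (z - complex_of_real (fst q)) / sqrt 2)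
                          - (-1) / (w + (z - complex_of_real (snd q)) / sqrt 2))"

definition T_integrand ::
  "complex \<Rightarrow> real \<Rightarrow> (complex \<Rightarrow> complex) \<Rightarrow> complex \<Rightarrow> real \<times> real \<Rightarrow> complex" where
  "T_integrand z s f w q =
     f (phi_plus z q w) *
     complex_of_real (cmod (phi_plus z q w) powr s + cmod (phi_minus z q w) powr s)"

text \<open>(T_{kappa,z,s} f)(w) for w in the closed half plane (value at i-infinity is 0).\<close>
definition T_op ::
  "(real \<Rightarrow> real) \<Rightarrow> (real \<times> real) measure \<Rightarrow> real \<Rightarrow> complex \<Rightarrow> real
   \<Rightarrow> (complex \<Rightarrow> complex) \<Rightarrow> complex \<Rightarrow> complex" where
  "T_op nu sg \<kappa> z s f w = (\<integral>q. T_integrand z s f w q \<partial>mu_law nu sg \<kappa>)"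

end

theory Submission
  imports Defs
begin

(*
  For real E and f in C, (T f)(w) is the mu-average of f (phi_plus) times the weight
  W = |phi_plus|^s + |phi_minus|^s. Since phi_plus maps the closed upper half plane into itself,
  |(T f)(w)| <= ||f|| * integral of W, so the theorem reduces to bounding the weight integral by 1/2.

  Pointwise, |phi_plus| and |phi_minus| are at most the mean of the inverse distances to the two
  poles, so W <= 2 (psi(x - q0/sqrt 2) + psi(x - q1/sqrt 2)) with psi(t) = |t|^(-s) and
  x = Re w + E/sqrt 2. Under mu each coordinate q_i = r + kappa p_i has density at most
  D = max B0 B1 / kappa. Splitting psi at |t| = R gives the bound D sqrt 2 psi_mass R + R^(-s) for each
  marginal integral, where psi_mass R is the integral of |t|^(-s) over [-R, R] (finite as s < 1).
  Taking R^(-s) = 1/16 and kappa large yields the contraction constant 1/2, independently of E.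
  The same estimates give that T f lies in C: continuity by dominated convergence after cutting out a
  thin strip around the poles, whose contribution is uniformly small, and decay at infinity from
  W <= 4 (Im w)^(-s) together with tightness of the marginals.
*)

definition denom :: "complex \<Rightarrow> (real \<times> real \<Rightarrow> real) \<Rightarrow> complex \<Rightarrow> real \<times> real \<Rightarrow> complex" where
  "denom z p w q = w + (z - complex_of_real (p q)) / sqrt 2"

definition weight :: "complex \<Rightarrow> real \<Rightarrow> complex \<Rightarrow> real \<times> real \<Rightarrow> real" where
  "weight z s w q = cmod (phi_plus z q w) powr s + cmod (phi_minus z q w) powr s"

lemma phi_plus_denom: "phi_plus z q w = (1/2) * ((-1) / denom z fst w q + (-1) / denom z snd w q)"
  unfolding phi_plus_def denom_def by simp

lemma phi_minus_denom: "phi_minus z q w = (1/2) * ((-1) / denom z fst w q - (-1) / denom z snd w q)"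
  unfolding phi_minus_def denom_def by simp

lemma Re_denom: "Im z = 0 \<Longrightarrow> Re (denom z p w q) = (Re w + Re z / sqrt 2) - p q / sqrt 2"
  unfolding denom_def by (simp add: diff_divide_distrib)

lemma Im_denom: "Im z = 0 \<Longrightarrow> Im (denom z p w q) = Im w"
  unfolding denom_def by simp

lemma weight_nonneg: "0 \<le> weight z s w q"
  unfolding weight_def by simp

lemma mean_powr_le_sum_powr:
  fixes u v s :: real
  assumes "0 \<le> u" "0 \<le> v" "0 < s"
  shows "((u + v) / 2) powr s \<le> u powr s + v powr s"
proof -
  have "((u + v) / 2) powr s \<le> max u v powr s"
    using assms by (intro powr_mono2) auto
  also have "\<dots> \<le> u powr s + v powr s"
    by (simp add: max_def)
  finally show ?thesis .
qed

lemma norm_phi_le: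
  fixes z w :: complex and q :: "real \<times> real"
  defines "m \<equiv> (inverse (cmod (denom z fst w q)) + inverse (cmod (denom z snd w q))) / 2"
  shows "cmod (phi_plus z q w) \<le> m" and "cmod (phi_minus z q w) \<le> m"
proof -
  have inv: "cmod ((-1) / a) = inverse (cmod a)" for a :: complex
    by (simp add: norm_divide divide_inverse norm_inverse)
  have "cmod ((-1) / denom z fst w q + (-1) / denom z snd w q)
      \<le> inverse (cmod (denom z fst w q)) + inverse (cmod (denom z snd w q))"
    using norm_triangle_ineq[of "(-1) / denom z fst w q" "(-1) / denom z snd w q"] unfolding inv .
  then show "cmod (phi_plus z q w) \<le> m"
    unfolding phi_plus_denom m_def norm_mult by simp
  have "cmod ((-1) / denom z fst w q - (-1) / denom z snd w q)
      \<le> inverse (cmod (denom z fst w q)) + inverse (cmod (denom z snd w q))"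
    using norm_triangle_ineq4[of "(-1) / denom z fst w q" "(-1) / denom z snd w q"] unfolding inv .
  then show "cmod (phi_minus z q w) \<le> m"
    unfolding phi_minus_denom m_def norm_mult by simp
qed

lemma weight_le:
  assumes "0 < s"
  shows "weight z s w q
    \<le> 2 * (inverse (cmod (denom z fst w q)) powr s + inverse (cmod (denom z snd w q)) powr s)"
proof -
  let ?u = "inverse (cmod (denom z fst w q))" and ?v = "inverse (cmod (denom z snd w q))"
  have "cmod (phi_plus z q w) powr s \<le> ((?u + ?v) / 2) powr s"
    and "cmod (phi_minus z q w) powr s \<le> ((?u + ?v) / 2) powr s"
    using norm_phi_le(1,2)[where z=z and w=w and q=q] assms by (auto intro!: powr_mono2)
  moreover have "((?u + ?v) / 2) powr s \<le> ?u powr s + ?v powr s"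
    using assms by (intro mean_powr_le_sum_powr) auto
  ultimately show ?thesis
    unfolding weight_def by (smt (verit))
qed

lemma inverse_norm_powr_le:
  assumes "0 < s" "0 < r" "r \<le> cmod a"
  shows "inverse (cmod a) powr s \<le> r powr (-s)"
proof -
  have "inverse (cmod a) powr s \<le> inverse r powr s"
    using assms by (intro powr_mono2 le_imp_inverse_le) auto
  also have "\<dots> = r powr (-s)"
    using assms by (simp add: powr_minus inverse_powr)
  finally show ?thesis .
qed

lemma weight_le_of_denom_ge:
  assumes "0 < s" "0 < r" "r \<le> cmod (denom z fst w q)" "r \<le> cmod (denom z snd w q)"
  shows "weight z s w q \<le> 4 * r powr (-s)"
  using weight_le[OF assms(1), of z w q]
    inverse_norm_powr_le[OF assms(1,2,3)] inverse_norm_powr_le[OF assms(1,2,4)]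
  by (simp add: algebra_simps)

lemma weight_le_Im:
  assumes "0 < s" "Im z = 0" "0 < Im w"
  shows "weight z s w q \<le> 4 * Im w powr (-s)"
  using assms abs_Im_le_cmod[of "denom z fst w q"] abs_Im_le_cmod[of "denom z snd w q"]
  by (intro weight_le_of_denom_ge) (auto simp: Im_denom)

definition psi :: "real \<Rightarrow> real \<Rightarrow> ennreal" where
  "psi s t = (if t = 0 then \<infinity> else ennreal (\<bar>t\<bar> powr (-s)))"

lemma psi_measurable[measurable]: "psi s \<in> borel_measurable borel"
  unfolding psi_def by measurable

lemma inverse_norm_powr_le_psi:
  assumes "0 < s"
  shows "ennreal (inverse (cmod a) powr s) \<le> psi s (Re a)"
  using inverse_norm_powr_le[OF assms, of "\<bar>Re a\<bar>" a] abs_Re_le_cmod[of a]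
  by (auto simp: psi_def intro: ennreal_leI)

(* Pointwise domination of the weight by the singularities at the two poles; this reduces all integral
   estimates to one-dimensional integrals of psi along the marginals. *)
lemma weight_le_psi:
  assumes "0 < s"
  shows "ennreal (weight z s w q) \<le> 2 * (psi s (Re (denom z fst w q)) + psi s (Re (denom z snd w q)))"
proof -
  let ?u = "inverse (cmod (denom z fst w q)) powr s" and ?v = "inverse (cmod (denom z snd w q)) powr s"
  have "ennreal (weight z s w q) \<le> 2 * (ennreal ?u + ennreal ?v)"
    using ennreal_leI[OF weight_le[OF assms, of z w q]] by (simp add: ennreal_mult ennreal_plus)
  also have "\<dots> \<le> 2 * (psi s (Re (denom z fst w q)) + psi s (Re (denom z snd w q)))"
    using inverse_norm_powr_le_psi[OF assms] by (intro mult_left_mono add_mono) auto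
  finally show ?thesis .
qed

lemma nn_integral_affine_sqrt2:
  assumes [measurable]: "G \<in> borel_measurable borel"
  shows "(\<integral>\<^sup>+y. G (x - y / sqrt 2) \<partial>lborel) = ennreal (sqrt 2) * (\<integral>\<^sup>+t. G t \<partial>lborel)"
proof -
  have "(\<integral>\<^sup>+t. G t \<partial>lborel) = ennreal (1 / sqrt 2) * (\<integral>\<^sup>+y. G (x + (-1 / sqrt 2) * y) \<partial>lborel)"
    using nn_integral_real_affine[OF assms, of "-1 / sqrt 2" x] by simp
  then have "ennreal (sqrt 2) * (\<integral>\<^sup>+t. G t \<partial>lborel)
      = ennreal (sqrt 2) * ennreal (1 / sqrt 2) * (\<integral>\<^sup>+y. G (x - y / sqrt 2) \<partial>lborel)"
    by (simp add: mult.assoc)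
  also have "ennreal (sqrt 2) * ennreal (1 / sqrt 2) = 1"
    by (simp flip: ennreal_mult)
  finally show ?thesis by simp
qed

(* The mass of psi near its pole: the integral of |t|^(-s) over [-eta, eta]. *)
definition psi_mass :: "real \<Rightarrow> real \<Rightarrow> real" where
  "psi_mass s \<eta> = 2 * (\<eta> powr (1 - s) / (1 - s))"

lemma psi_mass_nonneg: "s < 1 \<Longrightarrow> 0 \<le> psi_mass s \<eta>"
  unfolding psi_mass_def by simp

lemma nn_integral_psi_local:
  assumes s: "0 < s" "s < 1" and "0 \<le> \<eta>"
  shows "(\<integral>\<^sup>+t. psi s t * indicator {t. \<bar>t\<bar> \<le> \<eta>} t \<partial>lborel) \<le> ennreal (psi_mass s \<eta>)"
proof -
  define g where "g t = ennreal (indicator {0..\<eta>} t * t powr (-s))" for t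
  have [measurable]: "g \<in> borel_measurable borel"
    unfolding g_def by measurable
  have half: "(\<integral>\<^sup>+t. g t \<partial>lborel) = ennreal (\<eta> powr (1 - s) / (1 - s))"
  proof -
    have "((\<lambda>t. t powr (-s)) has_integral (\<eta> powr (-s + 1) / (-s + 1))) {0..\<eta>}"
      using assms by (intro has_integral_powr_from_0) auto
    from nn_integral_has_integral_lebesgue[OF _ this] show ?thesis
      by (simp add: g_def algebra_simps)
  qed
  have "AE t in lborel. psi s t * indicator {t. \<bar>t\<bar> \<le> \<eta>} t \<le> g t + g (- t)"
    using AE_lborel_singleton[of 0]
    by eventually_elim (auto simp: psi_def g_def indicator_def not_less)
  then have "(\<integral>\<^sup>+t. psi s t * indicator {t. \<bar>t\<bar> \<le> \<eta>} t \<partial>lborel) \<le> (\<integral>\<^sup>+t. g t + g (-t) \<partial>lborel)"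
    by (rule nn_integral_mono_AE)
  also have "\<dots> = (\<integral>\<^sup>+t. g t \<partial>lborel) + (\<integral>\<^sup>+t. g (-t) \<partial>lborel)"
    by (rule nn_integral_add) auto
  also have "(\<integral>\<^sup>+t. g (-t) \<partial>lborel) = (\<integral>\<^sup>+t. g t \<partial>lborel)"
    using nn_integral_real_affine[of g "-1" 0] by simp
  finally show ?thesis
    using s by (simp add: half psi_mass_def flip: ennreal_plus)
qed

lemma psi_le_truncated:
  assumes "0 < s" "0 < \<eta>"
  shows "psi s t \<le> psi s t * indicator {t. \<bar>t\<bar> \<le> \<eta>} t + ennreal (\<eta> powr (-s))"
proof (cases "\<bar>t\<bar> \<le> \<eta>")
  case False
  then have "\<bar>t\<bar> powr (-s) \<le> \<eta> powr (-s)"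
    using assms by (intro powr_mono2') auto
  then show ?thesis
    using False assms by (auto simp: psi_def)
qed simp

lemma psi_mass_small:
  assumes s: "0 < s" "s < 1" and "0 < a" "0 \<le> C"
  shows "\<exists>\<eta>>0. C * psi_mass s \<eta> \<le> a"
proof -
  define t where "t = a * (1 - s) / (2 * (C + 1))"
  have t: "0 < t"
    unfolding t_def using assms by auto
  define \<eta> where "\<eta> = t powr (1 / (1 - s))"
  have "\<eta> powr (1 - s) = t"
    unfolding \<eta>_def using t s by (simp add: powr_powr)
  then have "psi_mass s \<eta> = a / (C + 1)"
    unfolding psi_mass_def t_def using assms by (simp add: field_simps)
  then have "C * psi_mass s \<eta> = a * (C / (C + 1))"
    by simp
  also have "\<dots> \<le> a"
    using assms by (simp add: mult_left_le divide_le_eq)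
  finally have "C * psi_mass s \<eta> \<le> a" .
  moreover have "0 < \<eta>"
    unfolding \<eta>_def using t by simp
  ultimately show ?thesis
    by blast
qed

lemma measurable_fst_real[measurable]: "(fst :: real \<times> real \<Rightarrow> real) \<in> borel_measurable borel"
  by (intro borel_measurable_continuous_onI continuous_intros)

lemma measurable_snd_real[measurable]: "(snd :: real \<times> real \<Rightarrow> real) \<in> borel_measurable borel"
  by (intro borel_measurable_continuous_onI continuous_intros)

(* The points q for which one of the two poles lies within delta of x; removing this set keeps the
   denominators bounded away from zero. *)
definition pole_strip :: "real \<Rightarrow> real \<Rightarrow> (real \<times> real) set" where
  "pole_strip x \<delta> = {q. \<bar>x - fst q / sqrt 2\<bar> \<le> \<delta>} \<union> {q. \<bar>x - snd q / sqrt 2\<bar> \<le> \<delta>}"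

lemma pole_strip_sets[measurable]: "pole_strip x \<delta> \<in> sets borel"
  unfolding pole_strip_def by measurable

(* Probability measures on the plane whose two marginals have densities bounded by D, expressed through
   the integrals of nonnegative functions of one coordinate. *)
locale bounded_marginals = prob_space M for M :: "(real \<times> real) measure" +
  fixes D :: real
  assumes sets_M: "sets M = sets borel"
    and D_nonneg: "0 \<le> D"
    and marginal_bound: "\<And>H p. H \<in> borel_measurable borel \<Longrightarrow> p = fst \<or> p = snd \<Longrightarrow>
      (\<integral>\<^sup>+q. H (p q) \<partial>M) \<le> ennreal D * (\<integral>\<^sup>+y. H y \<partial>lborel)"
begin

lemma measurable_M: "measurable M N = measurable borel N"
  by (rule measurable_cong_sets[OF sets_M refl])

lemma sets_M_iff: "A \<in> sets M \<longleftrightarrow> A \<in> sets borel"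
  using sets_M by simp

lemma space_M[simp]: "space M = UNIV"
  using sets_eq_imp_space_eq[OF sets_M] by simp

lemma nn_integral_psi_on:
  assumes p: "p = fst \<or> p = snd" and s: "0 < s" "s < 1" and \<eta>: "0 < \<eta>" and S: "S \<in> sets borel"
  shows "(\<integral>\<^sup>+q. psi s (x - p q / sqrt 2) * indicator S q \<partial>M)
     \<le> ennreal (D * sqrt 2 * psi_mass s \<eta>) + ennreal (\<eta> powr (-s)) * emeasure M S"
proof -
  define G where "G t = psi s t * indicator {t. \<bar>t\<bar> \<le> \<eta>} t" for t
  have [measurable]: "G \<in> borel_measurable borel" "p \<in> borel_measurable borel"
    unfolding G_def using p by auto
  have "(\<integral>\<^sup>+q. psi s (x - p q / sqrt 2) * indicator S q \<partial>M)
      \<le> (\<integral>\<^sup>+q. G (x - p q / sqrt 2) + ennreal (\<eta> powr (-s)) * indicator S q \<partial>M)"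
    using psi_le_truncated[OF s(1) \<eta>] unfolding G_def
    by (intro nn_integral_mono) (auto split: split_indicator)
  also have "\<dots> = (\<integral>\<^sup>+q. G (x - p q / sqrt 2) \<partial>M) + ennreal (\<eta> powr (-s)) * emeasure M S"
    using S by (subst nn_integral_add) (auto simp: measurable_M sets_M_iff nn_integral_cmult_indicator)
  also have "(\<integral>\<^sup>+q. G (x - p q / sqrt 2) \<partial>M) \<le> ennreal D * (\<integral>\<^sup>+y. G (x - y / sqrt 2) \<partial>lborel)"
    by (rule marginal_bound[OF _ p]) measurable
  also have "\<dots> = ennreal D * (ennreal (sqrt 2) * (\<integral>\<^sup>+t. G t \<partial>lborel))"
    by (simp add: nn_integral_affine_sqrt2)
  also have "\<dots> \<le> ennreal D * (ennreal (sqrt 2) * ennreal (psi_mass s \<eta>))"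
    unfolding G_def using nn_integral_psi_local[OF s] \<eta> by (intro mult_left_mono) auto
  also have "\<dots> = ennreal (D * sqrt 2 * psi_mass s \<eta>)"
    using D_nonneg psi_mass_nonneg[OF s(2)] by (simp add: ennreal_mult mult.assoc)
  finally show ?thesis
    by (simp add: add_right_mono)
qed

lemma emeasure_strip_le:
  assumes p: "p = fst \<or> p = snd" and \<delta>: "0 \<le> \<delta>"
  shows "emeasure M {q. \<bar>x - p q / sqrt 2\<bar> \<le> \<delta>} \<le> ennreal (D * (2 * sqrt 2 * \<delta>))"
proof -
  define G :: "real \<Rightarrow> ennreal" where "G t = indicator {-\<delta>..\<delta>} t" for t
  have [measurable]: "G \<in> borel_measurable borel" "p \<in> borel_measurable borel"
    unfolding G_def using p by auto
  have "emeasure M {q. \<bar>x - p q / sqrt 2\<bar> \<le> \<delta>} = (\<integral>\<^sup>+q. G (x - p q / sqrt 2) \<partial>M)"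
  proof -
    have "{q. \<bar>x - p q / sqrt 2\<bar> \<le> \<delta>} \<in> sets M"
      unfolding sets_M_iff by measurable
    then have "emeasure M {q. \<bar>x - p q / sqrt 2\<bar> \<le> \<delta>}
        = (\<integral>\<^sup>+q. indicator {q. \<bar>x - p q / sqrt 2\<bar> \<le> \<delta>} q \<partial>M)"
      by simp
    also have "\<dots> = (\<integral>\<^sup>+q. G (x - p q / sqrt 2) \<partial>M)"
      by (intro nn_integral_cong) (auto simp: G_def split: split_indicator)
    finally show ?thesis .
  qed
  also have "\<dots> \<le> ennreal D * (\<integral>\<^sup>+y. G (x - y / sqrt 2) \<partial>lborel)"
    by (rule marginal_bound[OF _ p]) measurable
  also have "\<dots> = ennreal D * (ennreal (sqrt 2) * (2 * \<delta>))"
    using \<delta> by (simp add: nn_integral_affine_sqrt2 G_def)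
  also have "\<dots> = ennreal (D * (2 * sqrt 2 * \<delta>))"
    using D_nonneg \<delta> by (simp add: ennreal_mult mult.assoc mult.left_commute)
  finally show ?thesis .
qed

lemma nn_integral_psi_le:
  assumes p: "p = fst \<or> p = snd" and s: "0 < s" "s < 1" and R: "0 < R"
  shows "(\<integral>\<^sup>+q. psi s (x - p q / sqrt 2) \<partial>M) \<le> ennreal (D * sqrt 2 * psi_mass s R + R powr (-s))"
proof -
  have "(\<integral>\<^sup>+q. psi s (x - p q / sqrt 2) \<partial>M)
      \<le> ennreal (D * sqrt 2 * psi_mass s R) + ennreal (R powr (-s)) * emeasure M UNIV"
    using nn_integral_psi_on[OF p s R sets.top, of x] by (simp only: space_borel indicator_UNIV mult_1_right)
  also have "\<dots> = ennreal (D * sqrt 2 * psi_mass s R + R powr (-s))"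
    using emeasure_space_1 D_nonneg psi_mass_nonneg[OF s(2)] by (simp add: ennreal_plus)
  finally show ?thesis .
qed

lemma tail_measure_small:
  assumes p: "p = fst \<or> p = snd" and e: "0 < e"
  shows "\<exists>L\<ge>0. emeasure M {q. L \<le> \<bar>p q\<bar>} \<le> ennreal e"
proof -
  have [measurable]: "p \<in> borel_measurable borel"
    using p by auto
  define A where "A n = {q. real n \<le> \<bar>p q\<bar>}" for n :: nat
  have "A n \<in> sets borel" for n
    unfolding A_def by measurable
  then have "range A \<subseteq> sets M"
    using sets_M by auto
  moreover have "decseq A"
    unfolding A_def decseq_def by auto
  moreover have "(\<Inter>n. A n) = {}"
  proof -
    have "q \<notin> (\<Inter>n. A n)" for q
    proof -
      obtain n :: nat where "\<bar>p q\<bar> < real n"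
        using reals_Archimedean2 by blast
      then show ?thesis
        unfolding A_def by (auto simp: not_le)
    qed
    then show ?thesis
      by blast
  qed
  ultimately have "(\<lambda>n. measure M (A n)) \<longlonglongrightarrow> 0"
    using finite_Lim_measure_decseq[of A] by simp
  then have "eventually (\<lambda>n. measure M (A n) < e) sequentially"
    using e by (rule order_tendstoD)
  then obtain n where "measure M (A n) < e"
    unfolding eventually_sequentially by blast
  then have "emeasure M (A n) \<le> ennreal e"
    by (simp add: emeasure_eq_measure ennreal_leI)
  then show ?thesis
    unfolding A_def by (intro exI[of _ "real n"]) auto
qed

lemma nn_integral_psi_localized:
  assumes p: "p = fst \<or> p = snd" and s: "0 < s" "s < 1" and \<eta>: "0 < \<eta>" and R: "0 < R"
  shows "(\<integral>\<^sup>+q. psi s (x - p q / sqrt 2) \<partial>M)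
     \<le> ennreal (D * sqrt 2 * psi_mass s \<eta>) + ennreal (\<eta> powr (-s)) * emeasure M {q. \<bar>x - p q / sqrt 2\<bar> \<le> R}
        + ennreal (R powr (-s))"
proof -
  define S where "S = {q. \<bar>x - p q / sqrt 2\<bar> \<le> R}"
  have [measurable]: "p \<in> borel_measurable borel"
    using p by auto
  have S: "S \<in> sets borel"
    unfolding S_def by measurable
  have "(\<integral>\<^sup>+q. psi s (x - p q / sqrt 2) \<partial>M)
      \<le> (\<integral>\<^sup>+q. psi s (x - p q / sqrt 2) * indicator S q + ennreal (R powr (-s)) \<partial>M)"
    using psi_le_truncated[OF s(1) R] by (intro nn_integral_mono) (simp add: S_def indicator_def)
  also have "\<dots> = (\<integral>\<^sup>+q. psi s (x - p q / sqrt 2) * indicator S q \<partial>M) + ennreal (R powr (-s))"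
    using S emeasure_space_1 by (subst nn_integral_add) (auto simp: measurable_M)
  also have "\<dots> \<le> ennreal (D * sqrt 2 * psi_mass s \<eta>) + ennreal (\<eta> powr (-s)) * emeasure M S + ennreal (R powr (-s))"
    by (intro add_right_mono nn_integral_psi_on[OF p s \<eta> S])
  finally show ?thesis
    unfolding S_def .
qed

(* The integral of psi along a marginal tends to 0 when the pole moves to infinity: the near part is
   controlled by tightness, the far part by R^(-s). *)
lemma nn_integral_psi_vanishes:
  assumes p: "p = fst \<or> p = snd" and s: "0 < s" "s < 1" and e: "0 < e"
  shows "\<exists>L. \<forall>x. L \<le> \<bar>x\<bar> \<longrightarrow> (\<integral>\<^sup>+q. psi s (x - p q / sqrt 2) \<partial>M) \<le> ennreal (3 * e)"
proof -
  have [measurable]: "p \<in> borel_measurable borel"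
    using p by auto
  define R where "R = e powr (-1 / s)"
  have R: "0 < R" "R powr (-s) = e"
    unfolding R_def using e s by (simp_all add: powr_powr)
  obtain \<eta> where \<eta>: "0 < \<eta>" and mass: "D * sqrt 2 * psi_mass s \<eta> \<le> e"
    using psi_mass_small[OF s e, of "D * sqrt 2"] D_nonneg by auto
  have \<eta>_pos: "0 < \<eta> powr (-s)"
    using \<eta> by simp
  obtain L where L: "0 \<le> L" and tail: "emeasure M {q. L \<le> \<bar>p q\<bar>} \<le> ennreal (e / \<eta> powr (-s))"
    using tail_measure_small[OF p, of "e / \<eta> powr (-s)"] e \<eta>_pos by auto
  show ?thesis
  proof (intro exI allI impI)
    fix x :: real
    assume x: "L + R \<le> \<bar>x\<bar>"
    have "{q. \<bar>x - p q / sqrt 2\<bar> \<le> R} \<subseteq> {q. L \<le> \<bar>p q\<bar>}"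
    proof safe
      fix q
      assume "\<bar>x - p q / sqrt 2\<bar> \<le> R"
      then have "\<bar>x\<bar> - R \<le> \<bar>p q\<bar> / sqrt 2"
        using abs_triangle_ineq[of "x - p q / sqrt 2" "p q / sqrt 2"] by (simp add: abs_divide)
      also have "\<dots> \<le> \<bar>p q\<bar>"
        by (simp add: divide_le_eq mult_le_cancel_left1)
      finally show "L \<le> \<bar>p q\<bar>"
        using x by simp
    qed
    moreover have "{q. L \<le> \<bar>p q\<bar>} \<in> sets M"
      unfolding sets_M_iff by measurable
    ultimately have "emeasure M {q. \<bar>x - p q / sqrt 2\<bar> \<le> R} \<le> ennreal (e / \<eta> powr (-s))"
      using tail emeasure_mono order_trans by blast
    then have "ennreal (\<eta> powr (-s)) * emeasure M {q. \<bar>x - p q / sqrt 2\<bar> \<le> R}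
        \<le> ennreal (\<eta> powr (-s)) * ennreal (e / \<eta> powr (-s))"
      by (rule mult_left_mono) simp
    also have "\<dots> = ennreal e"
      using \<eta>_pos e by (simp flip: ennreal_mult)
    finally have near: "ennreal (\<eta> powr (-s)) * emeasure M {q. \<bar>x - p q / sqrt 2\<bar> \<le> R} \<le> ennreal e" .
    have "(\<integral>\<^sup>+q. psi s (x - p q / sqrt 2) \<partial>M)
       \<le> ennreal (D * sqrt 2 * psi_mass s \<eta>) + ennreal (\<eta> powr (-s)) * emeasure M {q. \<bar>x - p q / sqrt 2\<bar> \<le> R}
          + ennreal (R powr (-s))"
      by (rule nn_integral_psi_localized[OF p s \<eta> R(1)])
    also have "\<dots> \<le> ennreal e + ennreal e + ennreal e"
      using mass near R(2) by (intro add_mono) auto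
    also have "\<dots> = ennreal (3 * e)"
      using e by (simp flip: ennreal_plus)
    finally show "(\<integral>\<^sup>+q. psi s (x - p q / sqrt 2) \<partial>M) \<le> ennreal (3 * e)" .
  qed
qed

lemma nn_integral_weight_le_psi:
  assumes z: "Im z = 0" and s: "0 < s"
  shows "(\<integral>\<^sup>+q. ennreal (weight z s w q) \<partial>M)
    \<le> 2 * ((\<integral>\<^sup>+q. psi s ((Re w + Re z / sqrt 2) - fst q / sqrt 2) \<partial>M) + (\<integral>\<^sup>+q. psi s ((Re w + Re z / sqrt 2) - snd q / sqrt 2) \<partial>M))"
proof -
  have "(\<integral>\<^sup>+q. ennreal (weight z s w q) \<partial>M)
      \<le> (\<integral>\<^sup>+q. 2 * (psi s ((Re w + Re z / sqrt 2) - fst q / sqrt 2) + psi s ((Re w + Re z / sqrt 2) - snd q / sqrt 2)) \<partial>M)"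
    using weight_le_psi[OF s, of z w] by (intro nn_integral_mono) (simp add: Re_denom[OF z])
  also have "\<dots> = 2 * ((\<integral>\<^sup>+q. psi s ((Re w + Re z / sqrt 2) - fst q / sqrt 2) \<partial>M) + (\<integral>\<^sup>+q. psi s ((Re w + Re z / sqrt 2) - snd q / sqrt 2) \<partial>M))"
    by (simp add: nn_integral_cmult nn_integral_add measurable_M)
  finally show ?thesis .
qed

lemma nn_integral_weight_le:
  assumes z: "Im z = 0" and s: "0 < s" "s < 1" and R: "0 < R"
  shows "(\<integral>\<^sup>+q. ennreal (weight z s w q) \<partial>M) \<le> ennreal (4 * (D * sqrt 2 * psi_mass s R + R powr (-s)))"
proof -
  let ?c = "D * sqrt 2 * psi_mass s R + R powr (-s)"
  have "(\<integral>\<^sup>+q. ennreal (weight z s w q) \<partial>M) \<le> 2 * (ennreal ?c + ennreal ?c)"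
    using nn_integral_weight_le_psi[OF z s(1), of w]
      nn_integral_psi_le[OF _ s R, of fst] nn_integral_psi_le[OF _ s R, of snd]
    by (meson add_mono mult_left_mono order_trans zero_le)
  also have "\<dots> = ennreal 4 * ennreal ?c"
    by (simp add: algebra_simps flip: mult_2)
  also have "\<dots> = ennreal (4 * ?c)"
    using D_nonneg psi_mass_nonneg[OF s(2)] by (simp add: ennreal_mult)
  finally show ?thesis .
qed

lemma nn_integral_weight_le_half:
  assumes z: "Im z = 0" and s: "0 < s" "s < 1" and R: "0 < R" "R powr (-s) = 1 / 16"
    and small: "D * sqrt 2 * psi_mass s R \<le> 1 / 16"
  shows "(\<integral>\<^sup>+q. ennreal (weight z s w q) \<partial>M) \<le> ennreal (1 / 2)"
proof -
  have "4 * (a + b) \<le> 1 / 2" if "a \<le> 1 / 16" "b = 1 / 16" for a b :: real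
    using that by (simp add: algebra_simps)
  then have "4 * (D * sqrt 2 * psi_mass s R + R powr (-s)) \<le> 1 / 2"
    using small R(2) by blast
  then show ?thesis
    using nn_integral_weight_le[OF z s R(1), of w] by (meson ennreal_leI order_trans)
qed

lemma nn_integral_weight_strip:
  assumes z: "Im z = 0" and s: "0 < s" "s < 1" and \<eta>: "0 < \<eta>" and \<delta>: "0 \<le> \<delta>"
  shows "(\<integral>\<^sup>+q. ennreal (weight z s w q) * indicator (pole_strip x0 \<delta>) q \<partial>M)
    \<le> ennreal (8 * (D * sqrt 2 * psi_mass s \<eta> + \<eta> powr (-s) * (D * (2 * sqrt 2 * \<delta>))))"
proof -
  let ?x = "Re w + Re z / sqrt 2"
  define c where "c = D * sqrt 2 * psi_mass s \<eta> + \<eta> powr (-s) * (D * (2 * sqrt 2 * \<delta>))"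
  have c: "0 \<le> c"
    unfolding c_def using D_nonneg \<delta> psi_mass_nonneg[OF s(2)] by simp
  define S where "S p = {q. \<bar>x0 - p q / sqrt 2\<bar> \<le> \<delta>}" for p :: "real \<times> real \<Rightarrow> real"
  define P where "P p q = psi s (?x - p q / sqrt 2)" for p :: "real \<times> real \<Rightarrow> real" and q
  have [measurable]: "S fst \<in> sets borel" "S snd \<in> sets borel"
    unfolding S_def by measurable
  have piece: "(\<integral>\<^sup>+q. P p q * indicator (S p') q \<partial>M) \<le> ennreal c"
    if p: "p = fst \<or> p = snd" and p': "p' = fst \<or> p' = snd" for p p'
  proof -
    have [measurable]: "p' \<in> borel_measurable borel"
      using p' by auto
    have "(\<integral>\<^sup>+q. P p q * indicator (S p') q \<partial>M)
        \<le> ennreal (D * sqrt 2 * psi_mass s \<eta>) + ennreal (\<eta> powr (-s)) * emeasure M (S p')"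
      unfolding P_def by (rule nn_integral_psi_on[OF p s \<eta>]) (simp add: S_def)
    also have "\<dots> \<le> ennreal (D * sqrt 2 * psi_mass s \<eta>) + ennreal (\<eta> powr (-s)) * ennreal (D * (2 * sqrt 2 * \<delta>))"
      unfolding S_def by (intro add_mono order_refl mult_left_mono emeasure_strip_le[OF p' \<delta>]) auto
    also have "\<dots> = ennreal c"
      unfolding c_def using D_nonneg \<delta> psi_mass_nonneg[OF s(2)] by (simp add: ennreal_mult ennreal_plus)
    finally show ?thesis .
  qed
  have "(\<integral>\<^sup>+q. ennreal (weight z s w q) * indicator (pole_strip x0 \<delta>) q \<partial>M)
     \<le> (\<integral>\<^sup>+q. 2 * (P fst q * indicator (S fst) q + P fst q * indicator (S snd) q
                   + P snd q * indicator (S fst) q + P snd q * indicator (S snd) q) \<partial>M)"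
  proof (rule nn_integral_mono)
    fix q
    have "ennreal (weight z s w q) \<le> 2 * (P fst q + P snd q)"
      using weight_le_psi[OF s(1), of z w q] by (simp add: P_def Re_denom[OF z])
    moreover have "indicator (pole_strip x0 \<delta>) q \<le> (indicator (S fst) q + indicator (S snd) q :: ennreal)"
      unfolding pole_strip_def S_def by (auto split: split_indicator)
    ultimately have "ennreal (weight z s w q) * indicator (pole_strip x0 \<delta>) q
        \<le> 2 * (P fst q + P snd q) * (indicator (S fst) q + indicator (S snd) q)"
      by (intro mult_mono) auto
    then show "ennreal (weight z s w q) * indicator (pole_strip x0 \<delta>) q
       \<le> 2 * (P fst q * indicator (S fst) q + P fst q * indicator (S snd) q
             + P snd q * indicator (S fst) q + P snd q * indicator (S snd) q)"
      by (simp add: algebra_simps)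
  qed
  also have "\<dots> = 2 * ((\<integral>\<^sup>+q. P fst q * indicator (S fst) q \<partial>M) + (\<integral>\<^sup>+q. P fst q * indicator (S snd) q \<partial>M)
      + (\<integral>\<^sup>+q. P snd q * indicator (S fst) q \<partial>M) + (\<integral>\<^sup>+q. P snd q * indicator (S snd) q \<partial>M))"
    by (simp add: P_def nn_integral_cmult nn_integral_add measurable_M)
  also have "\<dots> \<le> 2 * (ennreal c + ennreal c + ennreal c + ennreal c)"
    by (intro mult_left_mono add_mono piece) auto
  also have "\<dots> = ennreal c * (2 + 2 + 2 + 2)"
    by (simp only: distrib_left distrib_right mult.commute)
  also have "\<dots> = ennreal (8 * c)"
    using c by (simp add: ennreal_mult mult.commute)
  finally show ?thesis
    unfolding c_def .
qed

lemma nn_integral_weight_strip_small: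
  assumes s: "0 < s" "s < 1" and e: "0 < e"
  shows "\<exists>\<delta>>0. \<forall>z w x0. Im z = 0 \<longrightarrow>
    (\<integral>\<^sup>+q. ennreal (weight z s w q) * indicator (pole_strip x0 \<delta>) q \<partial>M) \<le> ennreal e"
proof -
  obtain \<eta> where \<eta>: "0 < \<eta>" and mass: "(8 * D * sqrt 2) * psi_mass s \<eta> \<le> e / 2"
    using psi_mass_small[OF s, of "e / 2" "8 * D * sqrt 2"] e D_nonneg by auto
  define C where "C = 16 * sqrt 2 * D * \<eta> powr (-s)"
  have C: "0 \<le> C"
    unfolding C_def using D_nonneg by simp
  define \<delta> where "\<delta> = (e / 2) / (C + 1)"
  have \<delta>: "0 < \<delta>"
    unfolding \<delta>_def using e C by simp
  have "C * \<delta> \<le> e / 2"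
    unfolding \<delta>_def using e C by (simp add: divide_le_eq mult_left_le)
  then have "8 * (D * sqrt 2 * psi_mass s \<eta> + \<eta> powr (-s) * (D * (2 * sqrt 2 * \<delta>))) \<le> e"
    using mass unfolding C_def by (simp add: algebra_simps)
  then show ?thesis
    using nn_integral_weight_strip[OF _ s \<eta> less_imp_le[OF \<delta>]] \<delta>
    by (meson ennreal_leI order_trans)
qed

lemma nn_integral_weight_vanishes:
  assumes z: "Im z = 0" and s: "0 < s" "s < 1" and e: "0 < e"
  shows "\<exists>b. \<forall>w\<in>Hc. b \<le> cmod w \<longrightarrow> (\<integral>\<^sup>+q. ennreal (weight z s w q) \<partial>M) \<le> ennreal e"
proof -
  obtain L1 where L1: "\<And>x. L1 \<le> \<bar>x\<bar> \<Longrightarrow> (\<integral>\<^sup>+q. psi s (x - fst q / sqrt 2) \<partial>M) \<le> ennreal (3 * (e / 12))"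
    using nn_integral_psi_vanishes[of fst s "e / 12"] s e by auto
  obtain L2 where L2: "\<And>x. L2 \<le> \<bar>x\<bar> \<Longrightarrow> (\<integral>\<^sup>+q. psi s (x - snd q / sqrt 2) \<partial>M) \<le> ennreal (3 * (e / 12))"
    using nn_integral_psi_vanishes[of snd s "e / 12"] s e by auto
  define Y where "Y = (e / 4) powr (-1 / s)"
  have Y: "0 < Y" "Y powr (-s) = e / 4"
    unfolding Y_def using e s by (simp_all add: powr_powr)
  show ?thesis
  proof (intro exI ballI impI)
    fix w
    assume w: "w \<in> Hc" and far: "Y + (max L1 L2 + \<bar>Re z\<bar> / sqrt 2) \<le> cmod w"
    show "(\<integral>\<^sup>+q. ennreal (weight z s w q) \<partial>M) \<le> ennreal e"
    proof (cases "Y \<le> Im w")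
      case True
      have "weight z s w q \<le> e" for q
      proof -
        have "weight z s w q \<le> 4 * Im w powr (-s)"
          using weight_le_Im[OF s(1) z] True Y by auto
        also have "Im w powr (-s) \<le> Y powr (-s)"
          using True Y s by (intro powr_mono2') auto
        finally show ?thesis
          using Y by simp
      qed
      then have "(\<integral>\<^sup>+q. ennreal (weight z s w q) \<partial>M) \<le> (\<integral>\<^sup>+q. ennreal e \<partial>M)"
        by (intro nn_integral_mono ennreal_leI)
      then show ?thesis
        using emeasure_space_1 by simp
    next
      case False
      \<comment> \<open>close to the real axis but far out, both poles are far out in the tails of the marginals\<close>
      have "cmod w \<le> \<bar>Re w\<bar> + \<bar>Im w\<bar>"
        by (rule cmod_le)
      moreover have "\<bar>Im w\<bar> < Y"
        using False w by (auto simp: Hc_def)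
      moreover have "\<bar>Re w\<bar> \<le> \<bar>Re w + Re z / sqrt 2\<bar> + \<bar>Re z\<bar> / sqrt 2"
        using abs_triangle_ineq4[of "Re w + Re z / sqrt 2" "Re z / sqrt 2"] by (simp add: abs_divide)
      ultimately have x: "max L1 L2 \<le> \<bar>Re w + Re z / sqrt 2\<bar>"
        using far by linarith
      have "(\<integral>\<^sup>+q. ennreal (weight z s w q) \<partial>M)
        \<le> 2 * ((\<integral>\<^sup>+q. psi s ((Re w + Re z / sqrt 2) - fst q / sqrt 2) \<partial>M)
          + (\<integral>\<^sup>+q. psi s ((Re w + Re z / sqrt 2) - snd q / sqrt 2) \<partial>M))"
        by (rule nn_integral_weight_le_psi[OF z s(1)])
      also have "\<dots> \<le> 2 * (ennreal (3 * (e / 12)) + ennreal (3 * (e / 12)))"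
        using L1[of "Re w + Re z / sqrt 2"] L2[of "Re w + Re z / sqrt 2"] x
        by (intro mult_left_mono add_mono) auto
      also have "\<dots> = 2 * ennreal (e / 2)"
        using e by (simp flip: ennreal_plus)
      also have "\<dots> = ennreal e"
        using ennreal_mult[of 2 "e / 2"] e by simp
      finally show ?thesis .
    qed
  qed
qed

end

lemma closed_Hc: "closed Hc"
  unfolding Hc_def by (rule closed_halfspace_Im_ge)

lemma zero_in_Hc: "0 \<in> Hc"
  unfolding Hc_def by simp

(* For real z, phi_plus maps the closed upper half plane into itself, so f (phi_plus) is defined. *)
lemma phi_plus_in_Hc:
  assumes "Im z = 0" "w \<in> Hc"
  shows "phi_plus z q w \<in> Hc"
proof -
  have "0 \<le> Im (denom z fst w q)" "0 \<le> Im (denom z snd w q)"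
    using assms by (auto simp: Im_denom Hc_def)
  then have "Im (1 / denom z fst w q) \<le> 0" "Im (1 / denom z snd w q) \<le> 0"
    by (auto simp: Im_divide)
  then show ?thesis
    unfolding phi_plus_denom Hc_def by simp
qed

(* Functions in C are bounded: continuous on compacta and convergent at infinity. *)
lemma Cspace_bounded:
  assumes "f \<in> Cspace"
  shows "\<exists>B. \<forall>w\<in>Hc. cmod (f w) \<le> B"
proof -
  from assms obtain L where cont: "continuous_on Hc f"
    and lim: "(f \<longlongrightarrow> L) (inf at_infinity (principal Hc))"
    unfolding Cspace_def by blast
  have "eventually (\<lambda>w. dist (f w) L < 1) (inf at_infinity (principal Hc))"
    using lim by (rule tendstoD) simp
  then obtain R where R: "\<And>w. R \<le> norm w \<Longrightarrow> w \<in> Hc \<Longrightarrow> dist (f w) L < 1"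
    unfolding eventually_inf_principal eventually_at_infinity by blast
  have "compact (Hc \<inter> cball 0 R)"
    using closed_Hc by (intro closed_Int_compact) auto
  moreover have "continuous_on (Hc \<inter> cball 0 R) f"
    using cont by (rule continuous_on_subset) auto
  ultimately have "bounded (f ` (Hc \<inter> cball 0 R))"
    by (intro compact_imp_bounded compact_continuous_image)
  then obtain B where B: "\<And>w. w \<in> Hc \<inter> cball 0 R \<Longrightarrow> cmod (f w) \<le> B"
    unfolding bounded_iff by blast
  have "cmod (f w) \<le> max B (cmod L + 1)" if w: "w \<in> Hc" for w
  proof (cases "norm w \<le> R")
    case True
    then show ?thesis
      using B[of w] w by auto
  next
    case False
    then have "dist (f w) L < 1"
      using R[of w] w by auto
    then show ?thesis
      using norm_triangle_ineq2[of "f w" L] by (simp add: dist_norm)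
  qed
  then show ?thesis
    by blast
qed

lemma norm_le_supnorm:
  assumes "f \<in> Cspace" "w \<in> Hc"
  shows "cmod (f w) \<le> supnorm f"
proof -
  obtain B where "\<forall>w\<in>Hc. cmod (f w) \<le> B"
    using Cspace_bounded[OF assms(1)] by blast
  then have "bdd_above ((\<lambda>w. cmod (f w)) ` Hc)"
    by (auto intro: bdd_aboveI2)
  then show ?thesis
    unfolding supnorm_def by (rule cSUP_upper[OF assms(2)])
qed

lemma supnorm_nonneg: "f \<in> Cspace \<Longrightarrow> 0 \<le> supnorm f"
  using norm_le_supnorm[OF _ zero_in_Hc, of f] norm_ge_zero order_trans by blast

lemma supnorm_le:
  assumes "\<And>w. w \<in> Hc \<Longrightarrow> cmod (g w) \<le> c"
  shows "supnorm g \<le> c"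
  unfolding supnorm_def using zero_in_Hc assms by (intro cSUP_least) auto

lemma denom_measurable[measurable]:
  assumes [measurable]: "p \<in> borel_measurable borel"
  shows "(\<lambda>q. denom z p w q) \<in> borel_measurable borel"
  unfolding denom_def by measurable

lemma phi_plus_measurable[measurable]: "(\<lambda>q. phi_plus z q w) \<in> borel_measurable borel"
  unfolding phi_plus_denom by measurable

lemma phi_minus_measurable[measurable]: "(\<lambda>q. phi_minus z q w) \<in> borel_measurable borel"
  unfolding phi_minus_denom by measurable

lemma weight_measurable[measurable]: "weight z s w \<in> borel_measurable borel"
  unfolding weight_def by measurable

(* The integrand of the transfer operator is measurable in q (f is only continuous on Hc,
   so it is extended by 0). *)
lemma T_integrand_measurable:
  assumes "f \<in> Cspace" "Im z = 0" "w \<in> Hc"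
  shows "T_integrand z s f w \<in> borel_measurable borel"
proof -
  define f' where "f' x = (if x \<in> Hc then f x else 0)" for x
  have "continuous_on Hc f"
    using assms(1) unfolding Cspace_def by blast
  then have [measurable]: "f' \<in> borel_measurable borel"
    unfolding f'_def using closed_Hc by (intro borel_measurable_continuous_on_if) auto
  have "T_integrand z s f w = (\<lambda>q. f' (phi_plus z q w) * complex_of_real (weight z s w q))"
    using phi_plus_in_Hc[OF assms(2,3)] by (auto simp: T_integrand_def f'_def weight_def)
  also have "\<dots> \<in> borel_measurable borel"
    by measurable
  finally show ?thesis .
qed

lemma norm_T_integrand_le:
  assumes "f \<in> Cspace" "Im z = 0" "w \<in> Hc"
  shows "norm (T_integrand z s f w q) \<le> supnorm f * weight z s w q"
  unfolding T_integrand_def norm_mult weight_def[symmetric]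
  using norm_le_supnorm[OF assms(1) phi_plus_in_Hc[OF assms(2,3)]] weight_nonneg[of z s w q]
  by (simp add: mult_right_mono)

lemma T_integrand_continuous:
  assumes f: "f \<in> Cspace" and z: "Im z = 0" and s: "0 < s" and w0: "w0 \<in> Hc"
    and nonzero: "denom z fst w0 q \<noteq> 0" "denom z snd w0 q \<noteq> 0"
  shows "continuous (at w0 within Hc) (\<lambda>w. T_integrand z s f w q)"
proof -
  let ?F = "at w0 within Hc"
  have "((\<lambda>w. denom z p w q) \<longlongrightarrow> denom z p w0 q) ?F" for p
    unfolding denom_def by (intro tendsto_intros)
  then have plus: "((\<lambda>w. phi_plus z q w) \<longlongrightarrow> phi_plus z q w0) ?F"
    and minus: "((\<lambda>w. phi_minus z q w) \<longlongrightarrow> phi_minus z q w0) ?F"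
    unfolding phi_plus_denom phi_minus_denom using nonzero by (auto intro!: tendsto_intros)
  have "continuous_on Hc f"
    using f unfolding Cspace_def by blast
  then have "((\<lambda>w. f (phi_plus z q w)) \<longlongrightarrow> f (phi_plus z q w0)) ?F"
    by (rule continuous_on_tendsto_compose[OF _ plus phi_plus_in_Hc[OF z w0]])
       (auto simp: eventually_at_filter phi_plus_in_Hc[OF z] intro!: always_eventually)
  then show ?thesis
    unfolding continuous_within T_integrand_def
    using s by (intro tendsto_intros plus minus tendsto_powr') auto
qed

lemma continuous_within_integral_dominated:
  fixes G :: "'a::metric_space \<Rightarrow> 'b \<Rightarrow> 'c::{banach, second_countable_topology}"
  assumes M: "finite_measure M" and w0: "w0 \<in> S" and r: "0 < r"
    and meas: "\<And>w. w \<in> S \<Longrightarrow> G w \<in> borel_measurable M"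
    and bound: "\<And>w q. w \<in> S \<Longrightarrow> dist w w0 < r \<Longrightarrow> q \<in> space M \<Longrightarrow> norm (G w q) \<le> c"
    and cont: "\<And>q. q \<in> space M \<Longrightarrow> continuous (at w0 within S) (\<lambda>w. G w q)"
  shows "continuous (at w0 within S) (\<lambda>w. integral\<^sup>L M (G w))"
  unfolding continuous_within_sequentially
proof (intro allI impI)
  fix X
  assume X: "(\<forall>n. X n \<in> S) \<and> X \<longlonglongrightarrow> w0"
  \<comment> \<open>move the finitely many terms outside the ball back to the centre\<close>
  define Y where "Y n = (if dist (X n) w0 < r then X n else w0)" for n
  have "eventually (\<lambda>n. dist (X n) w0 < r) sequentially"
    using X r by (auto intro: tendstoD)
  then have XY: "eventually (\<lambda>n. X n = Y n) sequentially"
    by eventually_elim (simp add: Y_def)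
  have Y: "Y \<longlonglongrightarrow> w0"
    using X tendsto_cong[OF XY] by simp
  have YS: "Y n \<in> S" "dist (Y n) w0 < r" for n
    using X w0 r by (auto simp: Y_def)
  have "(\<lambda>n. integral\<^sup>L M (G (Y n))) \<longlonglongrightarrow> integral\<^sup>L M (G w0)"
  proof (rule integral_dominated_convergence[where w="\<lambda>_. c"])
    show "integrable M (\<lambda>_. c)"
      using M by (rule finite_measure.integrable_const)
    show "AE q in M. (\<lambda>n. G (Y n) q) \<longlonglongrightarrow> G w0 q"
    proof (rule AE_I2)
      fix q
      assume "q \<in> space M"
      then have "((\<lambda>w. G w q) \<circ> Y) \<longlonglongrightarrow> G w0 q"
        using cont Y YS(1) unfolding continuous_within_sequentially by blast
      then show "(\<lambda>n. G (Y n) q) \<longlonglongrightarrow> G w0 q"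
        by (simp add: o_def)
    qed
    show "G w0 \<in> borel_measurable M" "G (Y n) \<in> borel_measurable M" for n
      using meas w0 YS(1) by auto
    show "AE q in M. norm (G (Y n) q) \<le> c" for n
      using bound YS by (intro AE_I2) auto
  qed
  moreover have "eventually (\<lambda>n. integral\<^sup>L M (G (X n)) = integral\<^sup>L M (G (Y n))) sequentially"
    using XY by eventually_elim simp
  ultimately show "((\<lambda>w. integral\<^sup>L M (G w)) \<circ> X) \<longlonglongrightarrow> integral\<^sup>L M (G w0)"
    by (simp add: o_def tendsto_cong)
qed

lemma continuous_within_uniform_approx:
  fixes f :: "'a::t2_space \<Rightarrow> 'b::metric_space"
  assumes w0: "w0 \<in> S"
    and approx: "\<And>e. 0 < e \<Longrightarrow> \<exists>g. continuous (at w0 within S) g \<and> (\<forall>w\<in>S. dist (f w) (g w) \<le> e)"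
  shows "continuous (at w0 within S) f"
  unfolding continuous_within
proof (rule tendstoI)
  fix e :: real
  assume e: "0 < e"
  then obtain g where g: "continuous (at w0 within S) g" and close: "\<And>w. w \<in> S \<Longrightarrow> dist (f w) (g w) \<le> e / 4"
    using approx[of "e / 4"] by auto
  have "eventually (\<lambda>w. dist (g w) (g w0) < e / 4) (at w0 within S)"
    by (rule tendstoD[OF g[unfolded continuous_within]]) (use e in simp)
  moreover have "eventually (\<lambda>w. w \<in> S) (at w0 within S)"
    by (simp add: eventually_at_filter)
  ultimately show "eventually (\<lambda>w. dist (f w) (f w0) < e) (at w0 within S)"
  proof eventually_elim
    case (elim w)
    have "dist (f w) (f w0) \<le> dist (f w) (g w) + dist (g w) (g w0) + dist (g w0) (f w0)"
      using dist_triangle[of "f w" "f w0" "g w"] dist_triangle[of "g w" "f w0" "g w0"] by linarith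
    also have "\<dots> < e"
      using close[of w] close[OF w0] elim e by (simp add: dist_commute)
    finally show ?case .
  qed
qed

lemma weight_le_off_strip:
  assumes z: "Im z = 0" and s: "0 < s" and \<delta>: "0 < \<delta>"
    and off: "q \<notin> pole_strip (Re w0 + Re z / sqrt 2) \<delta>" and near: "dist w w0 < \<delta> / 2"
  shows "weight z s w q \<le> 4 * (\<delta> / 2) powr (-s)"
proof (rule weight_le_of_denom_ge[OF s])
  have "\<bar>Re w0 - Re w\<bar> < \<delta> / 2"
    using abs_Re_le_cmod[of "w0 - w"] near by (simp add: dist_norm norm_minus_commute)
  moreover have "\<delta> < \<bar>Re (denom z p w q) + (Re w0 - Re w)\<bar>" if "p = fst \<or> p = snd" for p
    using off that unfolding pole_strip_def Re_denom[OF z] by (auto simp: algebra_simps)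
  ultimately have "\<delta> / 2 \<le> \<bar>Re (denom z p w q)\<bar>" if "p = fst \<or> p = snd" for p
    using that abs_triangle_ineq[of "Re (denom z p w q)" "Re w0 - Re w"] by fastforce
  then show "\<delta> / 2 \<le> cmod (denom z fst w q)" "\<delta> / 2 \<le> cmod (denom z snd w q)"
    using abs_Re_le_cmod order_trans by blast+
qed (use \<delta> in simp)

context bounded_marginals
begin

lemma nn_integral_norm_T_le:
  assumes f: "f \<in> Cspace" and z: "Im z = 0" and w: "w \<in> Hc" and A: "A \<in> sets borel"
  shows "(\<integral>\<^sup>+q. ennreal (norm (T_integrand z s f w q)) * indicator A q \<partial>M)
     \<le> ennreal (supnorm f) * (\<integral>\<^sup>+q. ennreal (weight z s w q) * indicator A q \<partial>M)"
proof -
  have "(\<integral>\<^sup>+q. ennreal (norm (T_integrand z s f w q)) * indicator A q \<partial>M)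
      \<le> (\<integral>\<^sup>+q. ennreal (supnorm f) * (ennreal (weight z s w q) * indicator A q) \<partial>M)"
    using norm_T_integrand_le[OF f z w] supnorm_nonneg[OF f] weight_nonneg
    by (intro nn_integral_mono) (simp add: ennreal_mult[symmetric] split: split_indicator)
  also have "\<dots> = ennreal (supnorm f) * (\<integral>\<^sup>+q. ennreal (weight z s w q) * indicator A q \<partial>M)"
    using A by (intro nn_integral_cmult) (simp add: measurable_M)
  finally show ?thesis .
qed

lemma integrable_T_integrand:
  assumes f: "f \<in> Cspace" and z: "Im z = 0" and w: "w \<in> Hc" and s: "0 < s" "s < 1"
  shows "integrable M (T_integrand z s f w)"
proof (rule integrableI_bounded)
  show "T_integrand z s f w \<in> borel_measurable M"
    unfolding measurable_M by (rule T_integrand_measurable[OF f z w])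
  have "(\<integral>\<^sup>+q. ennreal (norm (T_integrand z s f w q)) \<partial>M)
      \<le> ennreal (supnorm f) * (\<integral>\<^sup>+q. ennreal (weight z s w q) \<partial>M)"
    using nn_integral_norm_T_le[OF f z w sets.top, of s] by simp
  also have "\<dots> < \<infinity>"
  proof -
    have "(\<integral>\<^sup>+q. ennreal (weight z s w q) \<partial>M) < \<infinity>"
      using order_le_less_trans[OF nn_integral_weight_le[OF z s zero_less_one] ennreal_less_top] by simp
    then show ?thesis
      by (simp add: ennreal_mult_less_top)
  qed
  finally show "(\<integral>\<^sup>+q. ennreal (norm (T_integrand z s f w q)) \<partial>M) < \<infinity>" .
qed

lemma norm_integral_T_le:
  assumes f: "f \<in> Cspace" and z: "Im z = 0" and w: "w \<in> Hc" and s: "0 < s" "s < 1"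
    and A: "A \<in> sets borel" and c: "0 \<le> c"
    and W: "(\<integral>\<^sup>+q. ennreal (weight z s w q) * indicator A q \<partial>M) \<le> ennreal c"
  shows "norm (integral\<^sup>L M (\<lambda>q. indicator A q *\<^sub>R T_integrand z s f w q)) \<le> supnorm f * c"
proof -
  have "integrable M (\<lambda>q. indicator A q *\<^sub>R T_integrand z s f w q)"
    using integrable_T_integrand[OF f z w s] A by (intro integrable_mult_indicator) (auto simp: sets_M)
  then have "ennreal (norm (integral\<^sup>L M (\<lambda>q. indicator A q *\<^sub>R T_integrand z s f w q)))
      \<le> (\<integral>\<^sup>+q. ennreal (norm (T_integrand z s f w q)) * indicator A q \<partial>M)"
    by (rule order_trans[OF integral_norm_bound_ennreal]) (auto intro!: nn_integral_mono split: split_indicator)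
  also have "\<dots> \<le> ennreal (supnorm f) * ennreal c"
    using nn_integral_norm_T_le[OF f z w A] mult_left_mono[OF W] by (rule order_trans) simp
  also have "\<dots> = ennreal (supnorm f * c)"
    using supnorm_nonneg[OF f] c by (simp add: ennreal_mult)
  finally show ?thesis
    using supnorm_nonneg[OF f] c by (simp add: ennreal_le_iff)
qed

(* T f is continuous on Hc: up to a uniformly small error from a thin pole strip, it is a
   dominated parameter integral. *)
lemma continuous_integral_T:
  assumes f: "f \<in> Cspace" and z: "Im z = 0" and s: "0 < s" "s < 1" and w0: "w0 \<in> Hc"
  shows "continuous (at w0 within Hc) (\<lambda>w. integral\<^sup>L M (T_integrand z s f w))"
proof (rule continuous_within_uniform_approx[OF w0])
  fix e :: real
  assume e: "0 < e"
  define e' where "e' = e / (supnorm f + 1)"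
  have e': "0 < e'" "supnorm f * e' \<le> e"
    unfolding e'_def using e supnorm_nonneg[OF f] by (auto simp: field_simps)
  obtain \<delta> where \<delta>: "0 < \<delta>"
    and strip: "\<And>w. (\<integral>\<^sup>+q. ennreal (weight z s w q) * indicator (pole_strip (Re w0 + Re z / sqrt 2) \<delta>) q \<partial>M)
                 \<le> ennreal e'"
    using nn_integral_weight_strip_small[OF s e'(1)] z by blast
  define A where "A = pole_strip (Re w0 + Re z / sqrt 2) \<delta>"
  have [measurable]: "A \<in> sets borel"
    unfolding A_def by measurable
  define g where "g w = integral\<^sup>L M (\<lambda>q. indicator (- A) q *\<^sub>R T_integrand z s f w q)" for w
  \<comment> \<open>off the strip the integrand is uniformly bounded near w0, so g is continuous at w0\<close>
  have "continuous (at w0 within Hc) g"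
    unfolding g_def
  proof (rule continuous_within_integral_dominated[OF finite_measure w0, of "\<delta> / 2"])
    show "(\<lambda>q. indicator (- A) q *\<^sub>R T_integrand z s f w q) \<in> borel_measurable M" if "w \<in> Hc" for w
      using T_integrand_measurable[OF f z that] unfolding measurable_M by measurable
    show "norm (indicator (- A) q *\<^sub>R T_integrand z s f w q) \<le> supnorm f * (4 * (\<delta> / 2) powr (-s))"
      if "w \<in> Hc" "dist w w0 < \<delta> / 2" for w q
      using norm_T_integrand_le[OF f z that(1), of s q] weight_le_off_strip[OF z s(1) \<delta> _ that(2), of q]
        supnorm_nonneg[OF f] unfolding A_def
      by (auto split: split_indicator intro: order_trans mult_left_mono)
    show "continuous (at w0 within Hc) (\<lambda>w. indicator (- A) q *\<^sub>R T_integrand z s f w q)" for q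
    proof (cases "q \<in> A")
      case False
      then have "\<delta> < \<bar>Re (denom z p w0 q)\<bar>" if "p = fst \<or> p = snd" for p
        using that unfolding A_def pole_strip_def Re_denom[OF z] by auto
      then have "denom z fst w0 q \<noteq> 0" "denom z snd w0 q \<noteq> 0"
        using \<delta> by fastforce+
      then show ?thesis
        by (intro continuous_intros T_integrand_continuous[OF f z s(1) w0])
    qed simp
  qed (use \<delta> in simp)
  moreover have "dist (integral\<^sup>L M (T_integrand z s f w)) (g w) \<le> e" if w: "w \<in> Hc" for w
  proof -
    have "integral\<^sup>L M (T_integrand z s f w) - g w = integral\<^sup>L M (\<lambda>q. indicator A q *\<^sub>R T_integrand z s f w q)"
    proof -
      have "integrable M (\<lambda>q. indicator B q *\<^sub>R T_integrand z s f w q)" if "B \<in> sets borel" for B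
        using integrable_T_integrand[OF f z w s] that by (intro integrable_mult_indicator) (auto simp: sets_M)
      then have "integral\<^sup>L M (T_integrand z s f w) - g w
          = integral\<^sup>L M (\<lambda>q. T_integrand z s f w q - indicator (- A) q *\<^sub>R T_integrand z s f w q)"
        unfolding g_def using integrable_T_integrand[OF f z w s] by (simp add: Bochner_Integration.integral_diff)
      also have "\<dots> = integral\<^sup>L M (\<lambda>q. indicator A q *\<^sub>R T_integrand z s f w q)"
        by (rule Bochner_Integration.integral_cong) (auto split: split_indicator)
      finally show ?thesis .
    qed
    also have "norm \<dots> \<le> supnorm f * e'"
      using norm_integral_T_le[OF f z w s _ _ strip[of w]] e' unfolding A_def by simp
    finally show ?thesis
      using e' by (simp add: dist_norm)
  qed
  ultimately show "\<exists>g. continuous (at w0 within Hc) g \<and> (\<forall>w\<in>Hc. dist (integral\<^sup>L M (T_integrand z s f w)) (g w) \<le> e)"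
    by blast
qed

lemma integral_T_vanishes:
  assumes f: "f \<in> Cspace" and z: "Im z = 0" and s: "0 < s" "s < 1"
  shows "((\<lambda>w. integral\<^sup>L M (T_integrand z s f w)) \<longlongrightarrow> 0) (inf at_infinity (principal Hc))"
proof (rule tendstoI)
  fix e :: real
  assume e: "0 < e"
  define e' where "e' = e / (2 * (supnorm f + 1))"
  have pos: "0 < supnorm f + 1"
    using supnorm_nonneg[OF f] by simp
  have "supnorm f * e' = e * (supnorm f / (2 * (supnorm f + 1)))"
    unfolding e'_def by simp
  also have "\<dots> < e * 1"
    using e pos by (intro mult_strict_left_mono) (auto simp: divide_less_eq)
  finally have e': "0 < e'" "supnorm f * e' < e"
    unfolding e'_def using e pos by auto
  obtain b where b: "\<And>w. w \<in> Hc \<Longrightarrow> b \<le> cmod w \<Longrightarrow> (\<integral>\<^sup>+q. ennreal (weight z s w q) \<partial>M) \<le> ennreal e'"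
    using nn_integral_weight_vanishes[OF z s e'(1)] by blast
  have "cmod (integral\<^sup>L M (T_integrand z s f w)) < e" if "w \<in> Hc" "b \<le> cmod w" for w
    using norm_integral_T_le[OF f z that(1) s sets.top, of e'] b[OF that] e' by simp
  then have "eventually (\<lambda>w. w \<in> Hc \<longrightarrow> dist (integral\<^sup>L M (T_integrand z s f w)) 0 < e) at_infinity"
    unfolding eventually_at_infinity by auto
  then show "eventually (\<lambda>w. dist (integral\<^sup>L M (T_integrand z s f w)) 0 < e) (inf at_infinity (principal Hc))"
    by (simp add: eventually_inf_principal)
qed

lemma transfer_operator_bound:
  assumes f: "f \<in> Cspace" and z: "Im z = 0" and s: "0 < s" "s < 1" and c: "0 \<le> c"
    and W: "\<And>w. w \<in> Hc \<Longrightarrow> (\<integral>\<^sup>+q. ennreal (weight z s w q) \<partial>M) \<le> ennreal c"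
  defines "Tf \<equiv> \<lambda>w. integral\<^sup>L M (T_integrand z s f w)"
  shows "(\<forall>w\<in>Hc. integrable M (T_integrand z s f w)) \<and> Tf \<in> Cspace
    \<and> (Tf \<longlongrightarrow> 0) (inf at_infinity (principal Hc)) \<and> supnorm Tf \<le> c * supnorm f"
proof (intro conjI ballI)
  show "integrable M (T_integrand z s f w)" if "w \<in> Hc" for w
    by (rule integrable_T_integrand[OF f z that s])
  show lim: "(Tf \<longlongrightarrow> 0) (inf at_infinity (principal Hc))"
    unfolding Tf_def by (rule integral_T_vanishes[OF f z s])
  have "continuous_on Hc Tf"
    unfolding Tf_def continuous_on_eq_continuous_within using continuous_integral_T[OF f z s] by blast
  then show "Tf \<in> Cspace"
    using lim unfolding Cspace_def by blast
  have "cmod (Tf w) \<le> c * supnorm f" if "w \<in> Hc" for w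
    using norm_integral_T_le[OF f z that s sets.top c] W[OF that] by (simp add: Tf_def mult.commute)
  then show "supnorm Tf \<le> c * supnorm f"
    by (rule supnorm_le)
qed

end

lemma nn_integral_scaled_marginal_le:
  fixes p :: "'a \<Rightarrow> real" and g :: "real \<Rightarrow> real" and H :: "real \<Rightarrow> ennreal"
  assumes p: "p \<in> measurable N borel" and dens: "distr N lborel p = density lborel g"
    and g: "g \<in> borel_measurable borel" "\<And>x. g x \<le> B" and B: "0 \<le> B"
    and \<kappa>: "0 < \<kappa>" and H: "H \<in> borel_measurable borel"
  shows "(\<integral>\<^sup>+x. H (r + \<kappa> * p x) \<partial>N) \<le> ennreal (B / \<kappa>) * (\<integral>\<^sup>+y. H y \<partial>lborel)"
proof -
  have "(\<integral>\<^sup>+x. H (r + \<kappa> * p x) \<partial>N) = (\<integral>\<^sup>+t. H (r + \<kappa> * t) \<partial>distr N lborel p)"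
    using p H by (subst nn_integral_distr) auto
  also have "\<dots> = (\<integral>\<^sup>+t. ennreal (g t) * H (r + \<kappa> * t) \<partial>lborel)"
    unfolding dens using g(1) H by (subst nn_integral_density) auto
  also have "\<dots> \<le> (\<integral>\<^sup>+t. ennreal B * H (r + \<kappa> * t) \<partial>lborel)"
    using g(2) by (intro nn_integral_mono mult_right_mono ennreal_leI) auto
  also have "\<dots> = ennreal B * (\<integral>\<^sup>+t. H (r + \<kappa> * t) \<partial>lborel)"
    using H by (intro nn_integral_cmult) auto
  also have "(\<integral>\<^sup>+t. H (r + \<kappa> * t) \<partial>lborel) = ennreal (1 / \<kappa>) * (\<integral>\<^sup>+y. H y \<partial>lborel)"
  proof -
    have "(\<integral>\<^sup>+y. H y \<partial>lborel) = ennreal \<kappa> * (\<integral>\<^sup>+t. H (r + \<kappa> * t) \<partial>lborel)"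
      using nn_integral_real_affine[OF H, of \<kappa> r] \<kappa> by simp
    then have "ennreal (1 / \<kappa>) * (\<integral>\<^sup>+y. H y \<partial>lborel)
        = ennreal (1 / \<kappa>) * ennreal \<kappa> * (\<integral>\<^sup>+t. H (r + \<kappa> * t) \<partial>lborel)"
      by (simp add: mult.assoc)
    also have "ennreal (1 / \<kappa>) * ennreal \<kappa> = 1"
      using \<kappa> by (simp flip: ennreal_mult)
    finally show ?thesis
      by simp
  qed
  also have "ennreal B * (ennreal (1 / \<kappa>) * (\<integral>\<^sup>+y. H y \<partial>lborel)) = ennreal (B / \<kappa>) * (\<integral>\<^sup>+y. H y \<partial>lborel)"
    using B \<kappa> by (simp add: mult.assoc[symmetric] flip: ennreal_mult)
  finally show ?thesis .
qed

(* Under Assumptions 2 the law mu of q has marginals with densities bounded by max B0 B1 / kappa: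
   convolving with nu only averages shifts. *)
lemma mu_law_bounded_marginals:
  assumes A: "Assumptions2 nu sg s0 s1 K Bnu B0 B1" and \<kappa>: "0 < \<kappa>"
  shows "bounded_marginals (mu_law nu sg \<kappa>) (max B0 B1 / \<kappa>)"
proof -
  let ?N = "density lborel nu"
  from A have [measurable]: "nu \<in> borel_measurable borel" "s0 \<in> borel_measurable borel" "s1 \<in> borel_measurable borel"
    and N: "prob_space ?N" and sg: "prob_space sg" and sets_sg: "sets sg = sets borel"
    and s0: "\<And>x. 0 \<le> s0 x \<and> s0 x \<le> B0" and s1: "\<And>x. 0 \<le> s1 x \<and> s1 x \<le> B1"
    and d0: "distr sg lborel fst = density lborel s0"
    and d1: "distr sg lborel snd = density lborel s1"
    unfolding Assumptions2_def by auto
  interpret N: prob_space ?N by (rule N)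
  interpret SG: prob_space sg by (rule sg)
  interpret NS: pair_prob_space ?N sg by unfold_locales
  have B: "0 \<le> max B0 B1"
    using s0[of 0] by auto
  have sets_pair: "sets (?N \<Otimes>\<^sub>M sg) = sets (borel \<Otimes>\<^sub>M (borel :: (real \<times> real) measure))"
    by (rule sets_pair_measure_cong) (auto simp: sets_sg)
  define T where "T = (\<lambda>(r::real, p::real \<times> real). (r + \<kappa> * fst p, r + \<kappa> * snd p))"
  have T: "T \<in> measurable (?N \<Otimes>\<^sub>M sg) borel"
    unfolding measurable_cong_sets[OF sets_pair refl] T_def by measurable
  have mu: "mu_law nu sg \<kappa> = distr (?N \<Otimes>\<^sub>M sg) borel T"
    unfolding mu_law_def T_def ..
  show ?thesis
  proof (rule bounded_marginals.intro)
    show "prob_space (mu_law nu sg \<kappa>)"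
      unfolding mu by (rule NS.P.prob_space_distr[OF T])
    show "bounded_marginals_axioms (mu_law nu sg \<kappa>) (max B0 B1 / \<kappa>)"
    proof
      show "sets (mu_law nu sg \<kappa>) = sets borel" "0 \<le> max B0 B1 / \<kappa>"
        unfolding mu using B \<kappa> by auto
      fix H :: "real \<Rightarrow> ennreal" and p :: "real \<times> real \<Rightarrow> real"
      assume [measurable]: "H \<in> borel_measurable borel" and p: "p = fst \<or> p = snd"
      have shifted: "(\<integral>\<^sup>+x. H (r + \<kappa> * p x) \<partial>sg) \<le> ennreal (max B0 B1 / \<kappa>) * (\<integral>\<^sup>+y. H y \<partial>lborel)" for r
      proof -
        have "p \<in> measurable sg borel"
          using p by (auto simp: measurable_cong_sets[OF sets_sg refl])
        then show ?thesis
          using p s0 s1 d0 d1 B \<kappa>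
          by (elim disjE) (auto simp: le_max_iff_disj intro!: nn_integral_scaled_marginal_le)
      qed
      have "(\<integral>\<^sup>+q. H (p q) \<partial>mu_law nu sg \<kappa>) = (\<integral>\<^sup>+x. H (p (T x)) \<partial>(?N \<Otimes>\<^sub>M sg))"
        unfolding mu using p by (subst nn_integral_distr[OF T]) auto
      also have "\<dots> = (\<integral>\<^sup>+r. \<integral>\<^sup>+x. H (r + \<kappa> * p x) \<partial>sg \<partial>?N)"
        using p by (subst SG.nn_integral_fst[symmetric]) (auto simp: measurable_cong_sets[OF sets_pair refl] T_def)
      also have "\<dots> \<le> (\<integral>\<^sup>+r. ennreal (max B0 B1 / \<kappa>) * (\<integral>\<^sup>+y. H y \<partial>lborel) \<partial>?N)"
        by (intro nn_integral_mono shifted)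
      also have "\<dots> = ennreal (max B0 B1 / \<kappa>) * (\<integral>\<^sup>+y. H y \<partial>lborel)"
        using N.emeasure_space_1 by simp
      finally show "(\<integral>\<^sup>+q. H (p q) \<partial>mu_law nu sg \<kappa>) \<le> ennreal (max B0 B1 / \<kappa>) * (\<integral>\<^sup>+y. H y \<partial>lborel)" .
    qed
  qed
qed

(* Choose R with R^(-s) = 1/16 and then kappa0 so large that D sqrt 2 psi_mass R <= 1/16 for
   D = max B0 B1 / kappa; then every weight integral is at most 1/2, uniformly in E. *)
theorem lemma6p1:
  fixes s Bnu B0 B1 K :: real
  assumes "0 < s" and "s < 1"
  shows "\<exists>\<kappa>0::real. \<forall>nu sg s0 s1 (\<kappa>::real).
           Assumptions2 nu sg s0 s1 K Bnu B0 B1 \<and> 0 \<le> \<kappa> \<and> \<kappa>0 \<le> \<kappa> \<longrightarrow>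
           (\<exists>c<1. \<forall>E::real. \<forall>f\<in>Cspace.
              (\<forall>w\<in>Hc. integrable (mu_law nu sg \<kappa>) (T_integrand (complex_of_real E) s f w)) \<and>
              T_op nu sg \<kappa> (complex_of_real E) s f \<in> Cspace \<and>
              (T_op nu sg \<kappa> (complex_of_real E) s f \<longlongrightarrow> 0) (inf at_infinity (principal Hc)) \<and>
              supnorm (T_op nu sg \<kappa> (complex_of_real E) s f) \<le> c * supnorm f)"
proof -
  have s: "0 < s" "s < 1"
    using assms by auto
  define R where "R = 16 powr (1 / s)"
  have R: "0 < R" "R powr (-s) = 1 / 16"
    unfolding R_def using s by (simp_all add: powr_powr powr_minus_divide)
  define B where "B = max B0 B1"
  define \<kappa>0 where "\<kappa>0 = 1 + 16 * sqrt 2 * psi_mass s R * \<bar>B\<bar>"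
  show ?thesis
  proof (rule exI[of _ \<kappa>0], intro allI impI)
    fix nu sg s0 s1 \<kappa>
    assume H: "Assumptions2 nu sg s0 s1 K Bnu B0 B1 \<and> 0 \<le> \<kappa> \<and> \<kappa>0 \<le> \<kappa>"
    have \<kappa>: "16 * sqrt 2 * psi_mass s R * \<bar>B\<bar> < \<kappa>"
      using H unfolding \<kappa>0_def by linarith
    have mass: "0 \<le> 16 * sqrt 2 * psi_mass s R * \<bar>B\<bar>"
      using psi_mass_nonneg[OF s(2)] by simp
    have "0 < \<kappa>"
      using \<kappa> mass by linarith
    interpret bounded_marginals "mu_law nu sg \<kappa>" "B / \<kappa>"
      unfolding B_def using H \<open>0 < \<kappa>\<close> by (intro mu_law_bounded_marginals) auto
    have "B / \<kappa> * sqrt 2 * psi_mass s R \<le> 1 / 16"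
      using \<kappa> D_nonneg mass by (simp add: field_simps)
    then have W: "(\<integral>\<^sup>+q. ennreal (weight z s w q) \<partial>mu_law nu sg \<kappa>) \<le> ennreal (1 / 2)" if "Im z = 0" for z w
      using nn_integral_weight_le_half[OF that s R] by blast
    have T_op_eq: "T_op nu sg \<kappa> z s f = (\<lambda>w. integral\<^sup>L (mu_law nu sg \<kappa>) (T_integrand z s f w))" for z f
      by (simp add: fun_eq_iff T_op_def)
    show "\<exists>c<1. \<forall>E::real. \<forall>f\<in>Cspace.
              (\<forall>w\<in>Hc. integrable (mu_law nu sg \<kappa>) (T_integrand (complex_of_real E) s f w)) \<and>
              T_op nu sg \<kappa> (complex_of_real E) s f \<in> Cspace \<and>
              (T_op nu sg \<kappa> (complex_of_real E) s f \<longlongrightarrow> 0) (inf at_infinity (principal Hc)) \<and>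
              supnorm (T_op nu sg \<kappa> (complex_of_real E) s f) \<le> c * supnorm f"
      unfolding T_op_eq using transfer_operator_bound[OF _ _ s _ W] by (intro exI[of _ "1 / 2"]) auto
  qed
qed

end
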